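(* Let $\gamma$ be a smooth Jordan curve, fix $r\in(0,1/2)$, and let $T_n\in T_{r,\theta_n}$ ($\theta_n\in(0,\pi)$) be a sequence of isosceles trapezoids inscribed in $\gamma$ converging to a point $p\in\gamma$ (all four vertices converge to $p$). Then $p$ is a vertex of $\gamma$, i.e. the derivative of the curvature of $\gamma$ vanishes at $p$.
   Context: For $r\in(0,1/2]$, $\theta\in(0,\pi)$ and $z\neq w\in\mathbb{C}$, let $z',w'$ be obtained by rotating $z,w$ clockwise by angle $\theta$ about the point $(1-r)z+rw$. $T_{r,\theta}$ is the set of 4-point sets $\{z,w,z',w'\}\subset\mathbb{C}$ obtained this way (isosceles trapezoids of aspect ratio $r$ and angle $\theta$); such a set is inscribed in $\gamma$ if it is contained in $\gamma$. *)

theory Defs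
  imports "HOL-Analysis.Analysis"
begin

definition curve_deriv :: "(real \<Rightarrow> complex) \<Rightarrow> real \<Rightarrow> complex" where
  "curve_deriv g = (\<lambda>t. vector_derivative g (at t))"

definition nth_curve_deriv :: "nat \<Rightarrow> (real \<Rightarrow> complex) \<Rightarrow> real \<Rightarrow> complex" where
  "nth_curve_deriv n g = (curve_deriv ^^ n) g"

definition smooth_jordan_param :: "(real \<Rightarrow> complex) \<Rightarrow> bool" where
  "smooth_jordan_param g \<longleftrightarrow>
     (\<forall>n t. nth_curve_deriv n g differentiable (at t)) \<and>
     (\<forall>t. g (t + 1) = g t) \<and>
     inj_on g {0..<1} \<and>
     (\<forall>t. curve_deriv g t \<noteq> 0)"

definition curvature :: "(real \<Rightarrow> complex) \<Rightarrow> real \<Rightarrow> real" where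
  "curvature g t = Im (cnj (curve_deriv g t) * nth_curve_deriv 2 g t) / (cmod (curve_deriv g t)) ^ 3"

definition is_vertex :: "(real \<Rightarrow> complex) \<Rightarrow> complex \<Rightarrow> bool" where
  "is_vertex g p \<longleftrightarrow> (\<exists>t. g t = p \<and> (curvature g has_real_derivative 0) (at t))"

text \<open>Isosceles trapezoids \<open>T_{r,\<theta>}\<close>: \<open>z', w'\<close> are \<open>z, w\<close> rotated clockwise by \<open>\<theta>\<close>
  about \<open>(1-r) z + r w\<close>.\<close>
definition trapezoids :: "real \<Rightarrow> real \<Rightarrow> complex set set" where
  "trapezoids r \<theta> =
     {{z, w, ((1 - of_real r) * z + of_real r * w) + cis (-\<theta>) * (z - ((1 - of_real r) * z + of_real r * w)),
             ((1 - of_real r) * z + of_real r * w) + cis (-\<theta>) * (w - ((1 - of_real r) * z + of_real r * w))} | z w. z \<noteq> w}"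

end

theory Submission
  imports Defs "HOL-Library.Periodic_Fun"
begin

text \<open>An isosceles trapezoid is concyclic. If \<open>A \<bar>y\<bar>\<^sup>2 + Re (B\<^sup>* y) + C = 0\<close> is its circle, the
  function \<open>\<phi> s = A \<bar>g s\<bar>\<^sup>2 + Re (B\<^sup>* g s) + C\<close> vanishes at the parameters of the four vertices,
  so by Rolle's theorem its first three derivatives vanish between them. Normalising \<open>(A, B, C)\<close>
  and letting the trapezoids shrink to \<open>p = g t\<^sub>0\<close>, a limit point gives a circle or line for which
  \<open>\<phi>\<close> and its first three derivatives vanish at \<open>t\<^sub>0\<close>. Eliminating \<open>(A, B, C)\<close> from these four
  equations leaves exactly the vanishing of the numerator of the derivative of the curvature.\<close>

lemma nth_curve_deriv_0 [simp]: "nth_curve_deriv 0 g = g"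
  by (simp add: nth_curve_deriv_def)

lemma nth_curve_deriv_Suc: "nth_curve_deriv (Suc k) g = curve_deriv (nth_curve_deriv k g)"
  by (simp add: nth_curve_deriv_def)

lemma nth_curve_deriv_1 [simp]: "nth_curve_deriv 1 g = curve_deriv g"
  by (simp add: nth_curve_deriv_def)

lemma smooth_jordan_param_has_vector_derivative:
  assumes "smooth_jordan_param g"
  shows "(nth_curve_deriv k g has_vector_derivative nth_curve_deriv (Suc k) g t) (at t)"
  using assms vector_derivative_works
  by (auto simp: smooth_jordan_param_def nth_curve_deriv_Suc curve_deriv_def)

lemma smooth_jordan_param_isCont:
  assumes "smooth_jordan_param g"
  shows "isCont (nth_curve_deriv k g) t"
  using smooth_jordan_param_has_vector_derivative[OF assms] has_vector_derivative_continuous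
  by blast

lemma periodic_inj_on_eq:
  fixes g :: "real \<Rightarrow> 'a"
  assumes per: "\<And>t. g (t + 1) = g t" and inj: "inj_on g {0..<1}"
    and "g a = g b" "\<bar>a - b\<bar> < 1"
  shows "a = b"
proof -
  interpret periodic_fun_simple' g
    by unfold_locales (rule per)
  have "g (frac a) = g (frac b)"
    using \<open>g a = g b\<close> by (simp add: frac_def minus_of_int)
  then have "frac a = frac b"
    using inj_onD[OF inj, of "frac a" "frac b"] by (simp add: frac_lt_1)
  then have "a - b = of_int (\<lfloor>a\<rfloor> - \<lfloor>b\<rfloor>)"
    by (simp add: frac_def)
  with \<open>\<bar>a - b\<bar> < 1\<close> have "\<bar>of_int (\<lfloor>a\<rfloor> - \<lfloor>b\<rfloor>)\<bar> < (1::real)"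
    by simp
  then have "\<lfloor>a\<rfloor> - \<lfloor>b\<rfloor> = 0"
    by (simp add: abs_less_iff)
  with \<open>a - b = _\<close> show ?thesis
    by simp
qed

lemma periodic_param_near:
  fixes g :: "real \<Rightarrow> 'a"
  assumes "\<And>t. g (t + 1) = g t"
  obtains s where "g s = g t" "\<bar>s - t0\<bar> \<le> 1/2"
proof -
  interpret periodic_fun_simple' g
    by unfold_locales (rule assms)
  define s where "s = t - of_int (round (t - t0))"
  have "g s = g t"
    by (simp add: s_def minus_of_int)
  moreover have "\<bar>s - t0\<bar> \<le> 1/2"
    using of_int_round_abs_le[of "t - t0"] by (simp add: s_def abs_minus_commute algebra_simps)
  ultimately show ?thesis
    using that by blast
qed

lemma periodic_inj_on_param_close:
  fixes g :: "real \<Rightarrow> 'a::heine_borel"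
  assumes cont: "continuous_on UNIV g" and per: "\<And>t. g (t + 1) = g t"
    and inj: "inj_on g {0..<1}" and "e > 0"
  obtains d where "d > 0" "\<And>t. dist (g t) (g t0) < d \<Longrightarrow> \<exists>s. g s = g t \<and> \<bar>s - t0\<bar> < e"
proof -
  define K where "K = {s. e \<le> \<bar>s - t0\<bar> \<and> \<bar>s - t0\<bar> \<le> 1/2}"
  have "K = cball t0 (1/2) - ball t0 e"
    by (auto simp: K_def dist_real_def abs_minus_commute[of t0])
  then have K: "compact (g ` K)"
    by (auto intro!: compact_continuous_image continuous_on_subset[OF cont] compact_diff)
  have t0_notin: "g t0 \<notin> g ` K"
  proof
    assume "g t0 \<in> g ` K"
    then obtain s where "s \<in> K" "g s = g t0"
      by auto
    have "\<bar>s - t0\<bar> < 1"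
      using \<open>s \<in> K\<close> by (simp add: K_def)
    then have "s = t0"
      using periodic_inj_on_eq[OF per inj \<open>g s = g t0\<close>] by simp
    with \<open>s \<in> K\<close> \<open>e > 0\<close> show False
      by (simp add: K_def)
  qed
  obtain d where "d > 0" and d: "\<And>y. y \<in> g ` K \<Longrightarrow> d \<le> dist (g t0) y"
    using separate_point_closed[OF compact_imp_closed[OF K] t0_notin] by blast
  show ?thesis
  proof (rule that[OF \<open>d > 0\<close>])
    fix t
    assume close: "dist (g t) (g t0) < d"
    obtain s where s: "g s = g t" "\<bar>s - t0\<bar> \<le> 1/2"
      using periodic_param_near[of g, OF per] .
    have "dist (g t0) (g s) < d"
      using close s(1) by (simp add: dist_commute)
    then have "s \<notin> K"
      using d[of "g s"] by fastforce
    with s(2) have "\<bar>s - t0\<bar> < e"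
      by (simp add: K_def)
    with s(1) show "\<exists>s. g s = g t \<and> \<bar>s - t0\<bar> < e"
      by blast
  qed
qed

section \<open>Isosceles trapezoids\<close>

lemma trapezoids_vertices:
  assumes "T \<in> trapezoids r \<theta>"
  obtains c v where "v \<noteq> 0"
    "T = {c + of_real r * v, c + of_real (r - 1) * v,
          c + (of_real r * cis (-\<theta>)) * v, c + (of_real (r - 1) * cis (-\<theta>)) * v}"
proof -
  obtain z w where "z \<noteq> w" and T: "T = {z, w,
      ((1 - of_real r) * z + of_real r * w) + cis (-\<theta>) * (z - ((1 - of_real r) * z + of_real r * w)),
      ((1 - of_real r) * z + of_real r * w) + cis (-\<theta>) * (w - ((1 - of_real r) * z + of_real r * w))}"
    using assms unfolding trapezoids_def by blast
  show ?thesis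
  proof (rule that[of "z - w" "(1 - of_real r) * z + of_real r * w"])
    show "z - w \<noteq> 0"
      using \<open>z \<noteq> w\<close> by simp
  qed (simp add: T algebra_simps)
qed

lemma power2_norm_scaled_unit_diff:
  fixes a :: real and u q :: complex
  assumes "cmod u = 1"
  shows "(cmod (of_real a * u - q))\<^sup>2 = a\<^sup>2 - 2 * a * Re (cnj q * u) + (cmod q)\<^sup>2"
proof -
  have "Re u * Re u + Im u * Im u = 1"
    using assms cmod_power2[of u] by (simp add: power2_eq_square)
  then show ?thesis
    unfolding cmod_power2 by (simp add: power2_eq_square) algebra
qed

lemma trapezoids_concyclic:
  assumes "T \<in> trapezoids r \<theta>" "sin \<theta> \<noteq> 0"
  obtains q R where "T \<subseteq> sphere q R"
proof -
  obtain c v where T: "T = {c + of_real r * v, c + of_real (r - 1) * v,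
          c + (of_real r * cis (-\<theta>)) * v, c + (of_real (r - 1) * cis (-\<theta>)) * v}"
    using trapezoids_vertices[OF assms(1)] by blast
  txt \<open>In the frame \<open>c = 0\<close>, \<open>v = 1\<close> the vertices are \<open>r\<close>, \<open>r - 1\<close>, \<open>r \<rho>\<close>, \<open>(r - 1) \<rho>\<close> with
    \<open>\<rho> = cis (-\<theta>)\<close>; the centre \<open>q\<close> is determined by \<open>Re (q\<^sup>* 1) = Re (q\<^sup>* \<rho>) = r - 1/2\<close>.\<close>
  define m where "m = r - 1/2"
  define q where "q = Complex m (m * (cos \<theta> - 1) / sin \<theta>)"
  define R where "R = sqrt (r * (1 - r) + (cmod q)\<^sup>2)"
  have "Re (cnj q * 1) = m" "Re (cnj q * cis (-\<theta>)) = m"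
    using assms(2) by (simp_all add: q_def cis.ctr field_simps)
  then have on_circle: "cmod (of_real a * u - q) = R"
    if u: "u = 1 \<or> u = cis (-\<theta>)" and a: "a = r \<or> a = r - 1" for a u
  proof -
    have "(cmod (of_real a * u - q))\<^sup>2 = a\<^sup>2 - 2 * a * m + (cmod q)\<^sup>2"
      using u power2_norm_scaled_unit_diff[of u a q] \<open>Re (cnj q * 1) = m\<close> \<open>Re (cnj q * cis (-\<theta>)) = m\<close>
      by auto
    also have "\<dots> = r * (1 - r) + (cmod q)\<^sup>2"
      using a by (auto simp: m_def power2_eq_square algebra_simps)
    finally show ?thesis
      unfolding R_def by (metis norm_ge_zero real_sqrt_unique)
  qed
  have "dist (c + q * v) (c + (of_real a * u) * v) = cmod v * R"
    if "u = 1 \<or> u = cis (-\<theta>)" "a = r \<or> a = r - 1" for a u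
    using on_circle[OF that]
    by (simp add: dist_norm norm_mult norm_minus_commute flip: left_diff_distrib)
  then have "T \<subseteq> sphere (c + q * v) (cmod v * R)"
    unfolding T by (fastforce simp: mult.assoc dest: spec[of _ 1])
  then show ?thesis
    using that by blast
qed

lemma card_trapezoids:
  assumes "T \<in> trapezoids r \<theta>" "sin \<theta> \<noteq> 0" "0 < r" "r < 1" "r \<noteq> 1/2"
  shows "card T = 4"
proof -
  obtain c v where "v \<noteq> 0" and T: "T = {c + of_real r * v, c + of_real (r - 1) * v,
          c + (of_real r * cis (-\<theta>)) * v, c + (of_real (r - 1) * cis (-\<theta>)) * v}"
    using trapezoids_vertices[OF assms(1)] by blast
  define \<rho> where "\<rho> = cis (-\<theta>)"
  have "\<rho> \<noteq> 1"
    using assms(2) by (auto simp: \<rho>_def complex_eq_iff)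
  have "cmod \<rho> = 1"
    by (simp add: \<rho>_def)
  have "\<bar>r\<bar> \<noteq> \<bar>r - 1\<bar>"
    using assms(3-5) by auto
  then have "of_real r \<noteq> of_real (r - 1) * \<rho>" "of_real (r - 1) \<noteq> of_real r * \<rho>"
    using arg_cong[where f = cmod] \<open>cmod \<rho> = 1\<close> by (metis norm_mult norm_of_real mult.right_neutral)+
  moreover have "of_real r \<noteq> of_real r * \<rho>" "of_real (r - 1) \<noteq> of_real (r - 1) * \<rho>"
    using \<open>\<rho> \<noteq> 1\<close> assms(3,4) by auto
  moreover have "of_real r * \<rho> \<noteq> of_real (r - 1) * \<rho>"
    using \<open>cmod \<rho> = 1\<close> by auto
  ultimately have "card {of_real r, of_real (r - 1), of_real r * \<rho>, of_real (r - 1) * \<rho> :: complex} = 4"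
    by auto
  moreover have "inj_on (\<lambda>x. c + x * v) X" for X
    using \<open>v \<noteq> 0\<close> by (auto intro: inj_onI)
  moreover have "T = (\<lambda>x. c + x * v) ` {of_real r, of_real (r - 1), of_real r * \<rho>, of_real (r - 1) * \<rho>}"
    by (simp add: T \<rho>_def)
  ultimately show ?thesis
    by (metis card_image)
qed

section \<open>Rolle's theorem for several zeros\<close>

lemma Rolle_finite_set:
  fixes f f' :: "real \<Rightarrow> real"
  assumes f': "\<And>x. (f has_real_derivative f' x) (at x)"
  shows "finite S \<Longrightarrow> card S = Suc m \<Longrightarrow> \<forall>x\<in>S. f x = 0 \<Longrightarrow>
    \<exists>S'. finite S' \<and> card S' = m \<and> S' \<subseteq> {Min S..Max S} \<and> (\<forall>x\<in>S'. f' x = 0)"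
proof (induction m arbitrary: S)
  case 0
  then show ?case by auto
next
  case (Suc m)
  define b where "b = Max S"
  define S0 where "S0 = S - {b}"
  define a where "a = Max S0"
  have "S \<noteq> {}"
    using Suc.prems(2) by auto
  then have "b \<in> S"
    using Suc.prems(1) by (simp add: b_def)
  then have S0: "finite S0" "card S0 = Suc m" "\<forall>x\<in>S0. f x = 0"
    using Suc.prems by (auto simp: S0_def)
  then have "S0 \<noteq> {}"
    by auto
  have "a \<in> S0"
    using S0(1) \<open>S0 \<noteq> {}\<close> by (simp add: a_def)
  then have "a < b"
    using Suc.prems(1) by (auto simp: b_def S0_def order.strict_iff_order)
  have "Min S \<le> Min S0"
    using Suc.prems \<open>S0 \<noteq> {}\<close> by (auto simp: S0_def intro!: Min_antimono)
  obtain S0' where S0': "finite S0'" "card S0' = m" "S0' \<subseteq> {Min S0..a}" "\<forall>x\<in>S0'. f' x = 0"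
    using Suc.IH[OF S0] unfolding a_def by blast
  have "f a = f b"
    using S0 Suc.prems \<open>a \<in> S0\<close> \<open>b \<in> S\<close> by auto
  moreover have "continuous_on {a..b} f"
    using f' by (meson DERIV_continuous continuous_at_imp_continuous_on)
  moreover have "\<And>x. f differentiable (at x)"
    using f' real_differentiable_def by blast
  ultimately obtain y where y: "a < y" "y < b" "(f has_real_derivative 0) (at y)"
    using Rolle[OF \<open>a < b\<close>] by blast
  have "f' y = 0"
    using DERIV_unique[OF f' y(3)] .
  moreover have "y \<notin> S0'"
    using S0'(3) y(1) by auto
  moreover have "insert y S0' \<subseteq> {Min S..Max S}"
  proof -
    have "Min S0 \<le> a"
      using S0(1) \<open>a \<in> S0\<close> by simp
    then have "{Min S0..a} \<subseteq> {Min S..Max S}" "y \<in> {Min S..Max S}"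
      using \<open>Min S \<le> Min S0\<close> \<open>a < b\<close> y(1,2) unfolding b_def by auto
    then show ?thesis
      using S0'(3) by blast
  qed
  ultimately show ?case
    using S0'(1,2,4) by (intro exI[of _ "insert y S0'"]) simp
qed

lemma Rolle_iterated:
  fixes f :: "nat \<Rightarrow> real \<Rightarrow> real"
  assumes f: "\<And>k x. (f k has_real_derivative f (Suc k) x) (at x)"
    and S: "finite S" "card S = Suc n" "\<forall>x\<in>S. f 0 x = 0"
    and "k \<le> n"
  shows "\<exists>x\<in>{Min S..Max S}. f k x = 0"
proof -
  have "\<exists>S'. finite S' \<and> card S' = Suc (n - k) \<and> S' \<subseteq> {Min S..Max S} \<and> (\<forall>x\<in>S'. f k x = 0)"
    using \<open>k \<le> n\<close>
  proof (induction k)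
    case 0
    have "S \<subseteq> {Min S..Max S}"
      using S(1) by auto
    with S show ?case
      by (intro exI[of _ S]) simp
  next
    case (Suc k)
    then obtain S' where S': "finite S'" "card S' = Suc (Suc (n - Suc k))" "S' \<subseteq> {Min S..Max S}"
      "\<forall>x\<in>S'. f k x = 0"
      by (auto simp: Suc_diff_Suc)
    obtain S'' where S'': "finite S''" "card S'' = Suc (n - Suc k)" "S'' \<subseteq> {Min S'..Max S'}"
      "\<forall>x\<in>S''. f (Suc k) x = 0"
      using Rolle_finite_set[OF f S'(1,2,4)] by blast
    have "S' \<noteq> {}"
      using S'(2) by auto
    then have "Min S' \<in> S'" "Max S' \<in> S'"
      using S'(1) by simp_all
    then have "{Min S'..Max S'} \<subseteq> {Min S..Max S}"
      using S'(3) by auto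
    with S'' show ?case
      by (intro exI[of _ S'']) auto
  qed
  then obtain S' where "card S' = Suc (n - k)" "S' \<subseteq> {Min S..Max S}" "\<forall>x\<in>S'. f k x = 0"
    by blast
  moreover from this(1) obtain x where "x \<in> S'"
    by (metis card.empty ex_in_conv nat.distinct(1))
  ultimately show ?thesis
    by blast
qed

section \<open>Derivatives of circle equations along the curve\<close>

lemma has_vector_derivative_cnj_mult:
  assumes "(u has_vector_derivative u') (at t)" "(v has_vector_derivative v') (at t)"
  shows "((\<lambda>s. cnj (u s) * v s) has_vector_derivative cnj u' * v t + cnj (u t) * v') (at t)"
  using has_vector_derivative_mult[OF has_vector_derivative_cnj[OF assms(1)] assms(2)]
  by (simp add: add.commute)

lemma has_real_derivative_Re_cnj_mult:
  assumes "(u has_vector_derivative u') (at t)" "(v has_vector_derivative v') (at t)"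
  shows "((\<lambda>s. Re (cnj (u s) * v s)) has_real_derivative Re (cnj u' * v t + cnj (u t) * v')) (at t)"
  using bounded_linear.has_vector_derivative[OF bounded_linear_Re has_vector_derivative_cnj_mult[OF assms]]
  by (simp add: has_real_derivative_iff_has_vector_derivative)

lemma has_real_derivative_Im_cnj_mult:
  assumes "(u has_vector_derivative u') (at t)" "(v has_vector_derivative v') (at t)"
  shows "((\<lambda>s. Im (cnj (u s) * v s)) has_real_derivative Im (cnj u' * v t + cnj (u t) * v')) (at t)"
  using bounded_linear.has_vector_derivative[OF bounded_linear_Im has_vector_derivative_cnj_mult[OF assms]]
  by (simp add: has_real_derivative_iff_has_vector_derivative)

lemma sum_choose_Suc_split:
  fixes a :: "nat \<Rightarrow> nat \<Rightarrow> 'a::comm_semiring_1"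
  shows "(\<Sum>j\<le>Suc k. of_nat (Suc k choose j) * a j (Suc k - j)) =
         (\<Sum>j\<le>k. of_nat (k choose j) * (a (Suc j) (k - j) + a j (Suc k - j)))"
proof -
  have shifted: "(\<Sum>j\<le>k. of_nat (k choose j) * a j (Suc k - j)) =
      a 0 (Suc k) + (\<Sum>j\<le>k. of_nat (k choose Suc j) * a (Suc j) (k - j))"
  proof -
    have "(\<Sum>j\<le>k. of_nat (k choose j) * a j (Suc k - j)) =
          (\<Sum>j\<le>Suc k. of_nat (k choose j) * a j (Suc k - j))"
      by (simp add: binomial_eq_0)
    then show ?thesis
      by (simp only: sum.atMost_Suc_shift) simp
  qed
  have "(\<Sum>j\<le>Suc k. of_nat (Suc k choose j) * a j (Suc k - j)) =
      a 0 (Suc k) + (\<Sum>j\<le>k. (of_nat (k choose j) + of_nat (k choose Suc j)) * a (Suc j) (k - j))"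
    by (simp only: sum.atMost_Suc_shift) simp
  also have "\<dots> = (\<Sum>j\<le>k. of_nat (k choose j) * (a (Suc j) (k - j) + a j (Suc k - j)))"
    by (simp add: shifted distrib_left distrib_right sum.distrib add_ac)
  finally show ?thesis .
qed

lemma has_real_derivative_Re_cnj_mult_Leibniz:
  assumes D: "\<And>j t. (D j has_vector_derivative D (Suc j) t) (at t)"
  shows "((\<lambda>s. \<Sum>j\<le>k. real (k choose j) * Re (cnj (D j s) * D (k - j) s)) has_real_derivative
           (\<Sum>j\<le>Suc k. real (Suc k choose j) * Re (cnj (D j t) * D (Suc k - j) t))) (at t)"
proof -
  have "((\<lambda>s. \<Sum>j\<le>k. real (k choose j) * Re (cnj (D j s) * D (k - j) s)) has_real_derivative
      (\<Sum>j\<le>k. real (k choose j) *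
         (Re (cnj (D (Suc j) t) * D (k - j) t) + Re (cnj (D j t) * D (Suc k - j) t)))) (at t)"
  proof (intro DERIV_sum DERIV_cmult)
    fix j assume "j \<in> {..k}"
    then have "Suc (k - j) = Suc k - j" by simp
    then show "((\<lambda>s. Re (cnj (D j s) * D (k - j) s)) has_real_derivative
        Re (cnj (D (Suc j) t) * D (k - j) t) + Re (cnj (D j t) * D (Suc k - j) t)) (at t)"
      using has_real_derivative_Re_cnj_mult[OF D[of j t] D[of "k - j" t]] by simp
  qed
  then show ?thesis
    by (simp only: sum_choose_Suc_split[where a = "\<lambda>i l. Re (cnj (D i t) * D l t)"])
qed

text \<open>For \<open>c = (A, B, C) \<noteq> 0\<close> the zero set of \<open>y \<mapsto> A \<bar>y\<bar>\<^sup>2 + Re (B\<^sup>* y) + C\<close> is a circle, a line,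
  a point or empty; \<open>circle_eqn_deriv g c k\<close> is the \<open>k\<close>-th derivative of this function along \<open>g\<close>,
  written out by the Leibniz rule.\<close>
definition circle_eqn_deriv :: "(real \<Rightarrow> complex) \<Rightarrow> real \<times> complex \<times> real \<Rightarrow> nat \<Rightarrow> real \<Rightarrow> real" where
  "circle_eqn_deriv g c k s = (case c of (A, B, C) \<Rightarrow>
     A * (\<Sum>j\<le>k. real (k choose j) * Re (cnj (nth_curve_deriv j g s) * nth_curve_deriv (k - j) g s))
     + Re (cnj B * nth_curve_deriv k g s) + (if k = 0 then C else 0))"

lemma circle_eqn_deriv_0:
  "circle_eqn_deriv g (A, B, C) 0 s = A * (cmod (g s))\<^sup>2 + Re (cnj B * g s) + C"
  by (simp add: circle_eqn_deriv_def cmod_power2 flip: power2_eq_square)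

lemma circle_eqn_deriv_scaleR: "circle_eqn_deriv g (a *\<^sub>R c) k s = a * circle_eqn_deriv g c k s"
  by (cases c) (simp add: circle_eqn_deriv_def algebra_simps scaleR_conv_of_real)

lemma has_real_derivative_circle_eqn_deriv:
  assumes "smooth_jordan_param g"
  shows "(circle_eqn_deriv g c k has_real_derivative circle_eqn_deriv g c (Suc k) t) (at t)"
proof -
  obtain A B C where c: "c = (A, B, C)" by (cases c)
  note D = smooth_jordan_param_has_vector_derivative[OF assms]
  have "((\<lambda>s. A * (\<Sum>j\<le>k. real (k choose j) * Re (cnj (nth_curve_deriv j g s) * nth_curve_deriv (k - j) g s))
      + Re (cnj B * nth_curve_deriv k g s) + (if k = 0 then C else 0)) has_real_derivative
      A * (\<Sum>j\<le>Suc k. real (Suc k choose j) * Re (cnj (nth_curve_deriv j g t) * nth_curve_deriv (Suc k - j) g t))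
      + Re (cnj 0 * nth_curve_deriv k g t + cnj B * nth_curve_deriv (Suc k) g t) + 0) (at t)"
    by (intro DERIV_add DERIV_cmult has_real_derivative_Re_cnj_mult_Leibniz has_real_derivative_Re_cnj_mult D
        has_vector_derivative_const DERIV_const)
  then show ?thesis
    unfolding circle_eqn_deriv_def[abs_def] c prod.case by (rule DERIV_cong) simp
qed

lemma tendsto_circle_eqn_deriv:
  assumes "smooth_jordan_param g" "(c \<longlongrightarrow> c0) F" "(s \<longlongrightarrow> s0) F"
  shows "((\<lambda>n. circle_eqn_deriv g (c n) k (s n)) \<longlongrightarrow> circle_eqn_deriv g c0 k s0) F"
proof -
  have D: "((\<lambda>n. nth_curve_deriv j g (s n)) \<longlongrightarrow> nth_curve_deriv j g s0) F" for j
    by (rule isCont_tendsto_compose[OF smooth_jordan_param_isCont[OF assms(1)] assms(3)])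
  have "((\<lambda>n. if k = 0 then snd (snd (c n)) else 0) \<longlongrightarrow> (if k = 0 then snd (snd c0) else 0)) F"
    using assms(2) by (auto intro: tendsto_intros)
  then show ?thesis
    unfolding circle_eqn_deriv_def case_prod_beta
    by (intro tendsto_intros D assms(2))
qed

lemma circle_eqn_deriv_1_2_3:
  fixes g :: "real \<Rightarrow> complex" and s A C :: real and B :: complex
  defines "D k \<equiv> nth_curve_deriv k g s"
  shows "circle_eqn_deriv g (A, B, C) 1 s = A * (2 * Re (cnj (D 0) * D 1)) + Re (cnj B * D 1)"
    and "circle_eqn_deriv g (A, B, C) 2 s =
           A * (2 * (Re (cnj (D 1) * D 1) + Re (cnj (D 0) * D 2))) + Re (cnj B * D 2)"
    and "circle_eqn_deriv g (A, B, C) 3 s =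
           A * (2 * (3 * Re (cnj (D 1) * D 2) + Re (cnj (D 0) * D 3))) + Re (cnj B * D 3)"
  by (simp_all add: circle_eqn_deriv_def D_def numeral_eq_Suc algebra_simps)

section \<open>Four-point contact with a circle forces a vertex\<close>

lemma has_real_derivative_curvature:
  fixes t :: real
  assumes "smooth_jordan_param g"
  defines "d1 \<equiv> curve_deriv g t" and "d2 \<equiv> nth_curve_deriv 2 g t" and "d3 \<equiv> nth_curve_deriv 3 g t"
  shows "(curvature g has_real_derivative
           (Im (cnj d1 * d3) * (cmod d1)\<^sup>2 - 3 * Im (cnj d1 * d2) * Re (cnj d1 * d2)) / cmod d1 ^ 5) (at t)"
proof -
  define N where "N s = Re (cnj (curve_deriv g s) * curve_deriv g s)" for s
  define X where "X s = Im (cnj (curve_deriv g s) * nth_curve_deriv 2 g s)" for s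
  have N_eq: "N s = (cmod (curve_deriv g s))\<^sup>2" for s
    by (simp add: N_def cmod_power2 flip: power2_eq_square)
  have curvature_eq: "curvature g = (\<lambda>s. X s / sqrt (N s) ^ 3)"
    by (simp add: fun_eq_iff curvature_def X_def N_eq)
  have D: "(curve_deriv g has_vector_derivative d2) (at t)"
    "(nth_curve_deriv 2 g has_vector_derivative d3) (at t)"
    using smooth_jordan_param_has_vector_derivative[OF assms(1), of 1 t]
      smooth_jordan_param_has_vector_derivative[OF assms(1), of 2 t]
    by (simp_all add: d2_def d3_def numeral_eq_Suc nth_curve_deriv_Suc)
  have "d1 \<noteq> 0"
    using assms(1) by (simp add: smooth_jordan_param_def d1_def)
  then have "N t > 0" "sqrt (N t) = cmod d1"
    by (simp_all add: N_eq d1_def)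
  have "(X has_real_derivative Im (cnj d2 * d2 + cnj d1 * d3)) (at t)"
    using has_real_derivative_Im_cnj_mult[OF D(1,2)]
    unfolding X_def[abs_def] d1_def d2_def by simp
  moreover have dN: "(N has_real_derivative Re (cnj d2 * d1 + cnj d1 * d2)) (at t)"
    using has_real_derivative_Re_cnj_mult[OF D(1,1)]
    unfolding N_def[abs_def] d1_def by simp
  have dsqrt: "((\<lambda>s. sqrt (N s)) has_real_derivative
      inverse (sqrt (N t)) / 2 * Re (cnj d2 * d1 + cnj d1 * d2)) (at t)"
    by (rule DERIV_chain2[OF DERIV_real_sqrt[OF \<open>N t > 0\<close>] dN])
  have "((\<lambda>s. sqrt (N s) ^ 3) has_real_derivative
      3 * (inverse (sqrt (N t)) / 2 * Re (cnj d2 * d1 + cnj d1 * d2)) * sqrt (N t) ^ 2) (at t)"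
    using DERIV_power[OF dsqrt, where n = 3] by (simp add: mult_ac)
  ultimately have "(curvature g has_real_derivative
      (Im (cnj d2 * d2 + cnj d1 * d3) * sqrt (N t) ^ 3 -
       X t * (3 * (inverse (sqrt (N t)) / 2 * Re (cnj d2 * d1 + cnj d1 * d2)) * sqrt (N t) ^ 2)) /
      (sqrt (N t) ^ 3 * sqrt (N t) ^ 3)) (at t)"
    unfolding curvature_eq using \<open>N t > 0\<close> by (intro DERIV_divide) auto
  then show ?thesis
    unfolding \<open>sqrt (N t) = cmod d1\<close> X_def d1_def[symmetric] d2_def[symmetric]
    by (rule DERIV_cong)
      (use \<open>d1 \<noteq> 0\<close> in \<open>simp add: field_simps power2_eq_square power3_eq_cube numeral_eq_Suc\<close>)
qed

lemma Re_cnj_mult_Im_cnj_mult: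
  "Re (cnj a * a) * Re (cnj v * w) = Re (cnj v * a) * Re (cnj a * w) + Im (cnj a * v) * Im (cnj a * w)"
  by (simp add: algebra_simps)

lemma circle_contact_order_3_algebra:
  fixes A C :: real and B p a b d :: complex
  assumes E0: "A * (cmod p)\<^sup>2 + Re (cnj B * p) + C = 0"
    and E1: "A * (2 * Re (cnj p * a)) + Re (cnj B * a) = 0"
    and E2: "A * (2 * (Re (cnj a * a) + Re (cnj p * b))) + Re (cnj B * b) = 0"
    and E3: "A * (2 * (3 * Re (cnj a * b) + Re (cnj p * d))) + Re (cnj B * d) = 0"
    and "a \<noteq> 0" and "(A, B, C) \<noteq> 0"
  shows "Im (cnj a * d) * (cmod a)\<^sup>2 - 3 * Im (cnj a * b) * Re (cnj a * b) = 0"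
proof -
  define V where "V = 2 * of_real A * p + B"
  define N where "N = Re (cnj a * a)"
  define \<sigma> where "\<sigma> = Im (cnj a * V)"
  define X where "X = Im (cnj a * b)"
  define Y where "Y = Re (cnj a * b)"
  define Z where "Z = Im (cnj a * d)"
  txt \<open>\<open>E1\<close> says that \<open>V\<close> is orthogonal to \<open>a\<close>, i.e. \<open>V = \<i> \<sigma> a / \<bar>a\<bar>\<^sup>2\<close>; then \<open>E2\<close> and \<open>E3\<close> become
    two linear relations in \<open>A\<close> and \<open>\<sigma>\<close>, and \<open>\<sigma> = 0\<close> would force \<open>(A, B, C) = 0\<close>.\<close>
  have N: "N = (cmod a)\<^sup>2"
    by (simp add: N_def cmod_power2 flip: power2_eq_square)
  with \<open>a \<noteq> 0\<close> have "N > 0"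
    by simp
  have V1: "Re (cnj V * a) = 0"
    using E1 by (simp add: V_def algebra_simps)
  have "2 * A * N + Re (cnj V * b) = 0"
    using E2 by (simp add: V_def N_def algebra_simps)
  moreover have "N * Re (cnj V * b) = \<sigma> * X"
    using Re_cnj_mult_Im_cnj_mult[of a V b] V1 by (simp add: N_def \<sigma>_def X_def)
  ultimately have W2: "\<sigma> * X = - 2 * A * N * N"
    by (metis add_eq_0_iff mult.commute mult_minus_left)
  have "6 * A * Y + Re (cnj V * d) = 0"
    using E3 by (simp add: V_def Y_def algebra_simps)
  moreover have "N * Re (cnj V * d) = \<sigma> * Z"
    using Re_cnj_mult_Im_cnj_mult[of a V d] V1 by (simp add: N_def \<sigma>_def Z_def)
  ultimately have W3: "\<sigma> * Z = - 6 * A * Y * N"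
    by (metis add_eq_0_iff mult.commute mult_minus_left)
  have "\<sigma> \<noteq> 0"
  proof
    assume "\<sigma> = 0"
    then have "A = 0"
      using W2 \<open>N > 0\<close> by simp
    have "cnj a * V = 0"
      using \<open>\<sigma> = 0\<close> V1 by (simp add: \<sigma>_def complex_eq_iff algebra_simps)
    then have "B = 0"
      using \<open>a \<noteq> 0\<close> \<open>A = 0\<close> by (simp add: V_def)
    then have "C = 0"
      using E0 \<open>A = 0\<close> by simp
    with \<open>A = 0\<close> \<open>B = 0\<close> \<open>(A, B, C) \<noteq> 0\<close> show False
      by (simp add: zero_prod_def)
  qed
  have "\<sigma> * (Z * N - 3 * X * Y) = N * (\<sigma> * Z) - 3 * Y * (\<sigma> * X)"
    by (simp add: algebra_simps)
  also have "\<dots> = 0"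
    unfolding W2 W3 by (simp add: algebra_simps)
  finally show ?thesis
    using \<open>\<sigma> \<noteq> 0\<close> N by (simp add: X_def Y_def Z_def mult.commute)
qed

lemma curvature_deriv_zero_if_circle_contact:
  assumes "smooth_jordan_param g" "c \<noteq> 0" "\<forall>k\<le>3. circle_eqn_deriv g c k t = 0"
  shows "(curvature g has_real_derivative 0) (at t)"
proof -
  obtain A B C where c: "c = (A, B, C)"
    by (cases c)
  have E: "circle_eqn_deriv g (A, B, C) 0 t = 0" "circle_eqn_deriv g (A, B, C) 1 t = 0"
    "circle_eqn_deriv g (A, B, C) 2 t = 0" "circle_eqn_deriv g (A, B, C) 3 t = 0"
    using assms(3) unfolding c by auto
  have "curve_deriv g t \<noteq> 0"
    using assms(1) by (simp add: smooth_jordan_param_def)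
  then have "Im (cnj (curve_deriv g t) * nth_curve_deriv 3 g t) * (cmod (curve_deriv g t))\<^sup>2
      - 3 * Im (cnj (curve_deriv g t) * nth_curve_deriv 2 g t) * Re (cnj (curve_deriv g t) * nth_curve_deriv 2 g t) = 0"
    using assms(2) unfolding c
    by (intro circle_contact_order_3_algebra[OF E[unfolded circle_eqn_deriv_0 circle_eqn_deriv_1_2_3
          nth_curve_deriv_0 nth_curve_deriv_1]])
  then show ?thesis
    using has_real_derivative_curvature[OF assms(1), of t] by simp
qed

lemma circle_contact_limit:
  assumes smooth: "smooth_jordan_param g"
    and near: "\<And>e. e > 0 \<Longrightarrow> \<exists>c. c \<noteq> 0 \<and> (\<forall>k\<le>n. \<exists>s. \<bar>s - t\<bar> < e \<and> circle_eqn_deriv g c k s = 0)"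
  shows "\<exists>c. c \<noteq> 0 \<and> (\<forall>k\<le>n. circle_eqn_deriv g c k t = 0)"
proof -
  have "\<exists>c s. norm c = 1 \<and>
      (\<forall>k\<le>n. \<bar>s k - t\<bar> < inverse (Suc m) \<and> circle_eqn_deriv g c k (s k) = 0)" for m
  proof -
    obtain c where "c \<noteq> 0" and "\<forall>k\<le>n. \<exists>s. \<bar>s - t\<bar> < inverse (Suc m) \<and> circle_eqn_deriv g c k s = 0"
      using near[of "inverse (Suc m)"] by auto
    then obtain s where "\<forall>k\<le>n. \<bar>s k - t\<bar> < inverse (Suc m) \<and> circle_eqn_deriv g c k (s k) = 0"
      by metis
    with \<open>c \<noteq> 0\<close> show ?thesis
      by (intro exI[of _ "inverse (norm c) *\<^sub>R c"] exI[of _ s]) (simp add: circle_eqn_deriv_scaleR)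
  qed
  then obtain c s where c_norm: "\<And>m. norm (c m) = 1"
    and s: "\<And>m. \<forall>k\<le>n. \<bar>s m k - t\<bar> < inverse (Suc m) \<and> circle_eqn_deriv g (c m) k (s m k) = 0"
    by metis
  have "\<forall>m. c m \<in> sphere 0 1"
    using c_norm by simp
  then obtain l \<sigma> where "l \<in> sphere 0 1" "strict_mono \<sigma>" and lim_c: "(c \<circ> \<sigma>) \<longlonglongrightarrow> l"
    using seq_compactE[OF compact_imp_seq_compact[OF compact_sphere]] by blast
  have "circle_eqn_deriv g l k t = 0" if k: "k \<le> n" for k
  proof -
    have "norm (s (\<sigma> m) k - t) \<le> inverse (real (Suc m))" for m
    proof -
      have "norm (s (\<sigma> m) k - t) < inverse (real (Suc (\<sigma> m)))"
        using s k by simp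
      also have "\<dots> \<le> inverse (real (Suc m))"
        using seq_suble[OF \<open>strict_mono \<sigma>\<close>, of m] by (simp add: le_imp_inverse_le)
      finally show ?thesis
        by simp
    qed
    then have "(\<lambda>m. s (\<sigma> m) k - t) \<longlonglongrightarrow> 0"
      by (intro Lim_null_comparison[OF _ LIMSEQ_inverse_real_of_nat] always_eventually allI)
    then have "(\<lambda>m. s (\<sigma> m) k) \<longlonglongrightarrow> t"
      by (simp add: LIM_zero_iff)
    with lim_c have "(\<lambda>m. circle_eqn_deriv g (c (\<sigma> m)) k (s (\<sigma> m) k)) \<longlonglongrightarrow> circle_eqn_deriv g l k t"
      by (intro tendsto_circle_eqn_deriv[OF smooth]) (simp_all add: comp_def)
    moreover have "(\<lambda>m. circle_eqn_deriv g (c (\<sigma> m)) k (s (\<sigma> m) k)) = (\<lambda>m. 0)"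
      using s k by simp
    ultimately show ?thesis
      by (simp add: LIMSEQ_const_iff)
  qed
  moreover have "l \<noteq> 0"
    using \<open>l \<in> sphere 0 1\<close> by auto
  ultimately show ?thesis
    by blast
qed

lemma circle_contact_of_concyclic_points:
  assumes smooth: "smooth_jordan_param g"
    and "P \<subseteq> sphere q R" "card P = Suc n"
    and params: "\<forall>y\<in>P. \<exists>s. g s = y \<and> \<bar>s - t\<bar> < e"
  shows "\<exists>c. c \<noteq> 0 \<and> (\<forall>k\<le>n. \<exists>s. \<bar>s - t\<bar> < e \<and> circle_eqn_deriv g c k s = 0)"
proof -
  obtain \<tau> where \<tau>: "\<And>y. y \<in> P \<Longrightarrow> g (\<tau> y) = y \<and> \<bar>\<tau> y - t\<bar> < e"
    using params by metis
  define S where "S = \<tau> ` P"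
  have "inj_on \<tau> P"
    by (metis \<tau> inj_onI)
  then have "finite S" "card S = Suc n"
    using \<open>card P = Suc n\<close> card_ge_0_finite[of P] by (simp_all add: S_def card_image)
  define c where "c = (1::real, - 2 * q, (cmod q)\<^sup>2 - R\<^sup>2)"
  have "circle_eqn_deriv g c 0 s = (cmod (g s - q))\<^sup>2 - R\<^sup>2" for s
    by (simp add: c_def circle_eqn_deriv_0 cmod_power2 power2_diff algebra_simps)
  then have zeros: "\<forall>s\<in>S. circle_eqn_deriv g c 0 s = 0"
    using \<tau> \<open>P \<subseteq> sphere q R\<close> by (auto simp: S_def dist_norm norm_minus_commute)
  have interval: "{Min S..Max S} \<subseteq> {s. \<bar>s - t\<bar> < e}"
  proof -
    have "S \<noteq> {}" "\<forall>s\<in>S. \<bar>s - t\<bar> < e"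
      using \<open>card S = Suc n\<close> \<tau> by (auto simp: S_def)
    then have "\<bar>Min S - t\<bar> < e" "\<bar>Max S - t\<bar> < e"
      using \<open>finite S\<close> by simp_all
    then show ?thesis
      by auto
  qed
  have "\<exists>s. \<bar>s - t\<bar> < e \<and> circle_eqn_deriv g c k s = 0" if "k \<le> n" for k
    using Rolle_iterated[where f = "circle_eqn_deriv g c", OF has_real_derivative_circle_eqn_deriv[OF smooth]
        \<open>finite S\<close> \<open>card S = Suc n\<close> zeros that] interval
    by blast
  moreover have "c \<noteq> 0"
    by (simp add: c_def zero_prod_def)
  ultimately show ?thesis
    by blast
qed

lemma circle_contact_of_trapezoid:
  assumes smooth: "smooth_jordan_param g" and "T \<in> trapezoids r \<theta>"
    and "0 < r" "r < 1/2" "0 < \<theta>" "\<theta> < pi"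
    and "\<forall>y\<in>T. \<exists>s. g s = y \<and> \<bar>s - t\<bar> < e"
  shows "\<exists>c. c \<noteq> 0 \<and> (\<forall>k\<le>3. \<exists>s. \<bar>s - t\<bar> < e \<and> circle_eqn_deriv g c k s = 0)"
proof -
  have "sin \<theta> \<noteq> 0"
    using sin_gt_zero[OF \<open>0 < \<theta>\<close> \<open>\<theta> < pi\<close>] by simp
  then obtain q R where "T \<subseteq> sphere q R"
    using trapezoids_concyclic[OF \<open>T \<in> trapezoids r \<theta>\<close>] by blast
  moreover have "card T = Suc 3"
    using card_trapezoids[OF \<open>T \<in> trapezoids r \<theta>\<close> \<open>sin \<theta> \<noteq> 0\<close>] assms(3,4) by simp
  ultimately show ?thesis
    using circle_contact_of_concyclic_points[OF smooth] assms(7) by blast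
qed

theorem corollary3p3:
  fixes g :: "real \<Rightarrow> complex" and r :: real and \<theta> :: "nat \<Rightarrow> real"
    and T :: "nat \<Rightarrow> complex set" and p :: complex
  assumes "smooth_jordan_param g"
    and "0 < r" "r < 1/2"
    and "\<And>n. 0 < \<theta> n \<and> \<theta> n < pi"
    and "\<And>n. T n \<in> trapezoids r (\<theta> n)"
    and "\<And>n. T n \<subseteq> g ` {0..1}"
    and "p \<in> g ` {0..1}"
    and "\<And>e. e > 0 \<Longrightarrow> \<forall>\<^sub>F n in sequentially. T n \<subseteq> ball p e"
  shows "is_vertex g p"
proof -
  obtain t0 where p: "p = g t0"
    using assms(7) by blast
  have cont: "continuous_on UNIV g"
    using smooth_jordan_param_isCont[OF assms(1), where k = 0] by (simp add: continuous_at_imp_continuous_on)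
  have "\<exists>c. c \<noteq> 0 \<and> (\<forall>k\<le>3. \<exists>s. \<bar>s - t0\<bar> < e \<and> circle_eqn_deriv g c k s = 0)" if "e > 0" for e
  proof -
    obtain d where "d > 0" and d: "\<And>t. dist (g t) p < d \<Longrightarrow> \<exists>s. g s = g t \<and> \<bar>s - t0\<bar> < e"
      using periodic_inj_on_param_close[OF cont _ _ \<open>e > 0\<close>, of t0] assms(1)
      unfolding p smooth_jordan_param_def by blast
    obtain n where "T n \<subseteq> ball p d"
      using eventually_happens'[OF _ assms(8)[OF \<open>d > 0\<close>]] by auto
    then have "\<forall>y\<in>T n. \<exists>s. g s = y \<and> \<bar>s - t0\<bar> < e"
      using assms(6)[of n] d by (fastforce simp: dist_commute)
    then show ?thesis
      using circle_contact_of_trapezoid[OF assms(1,5) assms(2,3)] assms(4) by blast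
  qed
  then obtain c where "c \<noteq> 0" "\<forall>k\<le>3. circle_eqn_deriv g c k t0 = 0"
    using circle_contact_limit[OF assms(1)] by blast
  then show ?thesis
    unfolding is_vertex_def p using curvature_deriv_zero_if_circle_contact[OF assms(1)] by blast
qed

end
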